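(* Let $R$ be a $*$-ring and $a\in R$. If $a$ is strongly $*$-regular, then $a$ is strongly $\pi$-$*$-regular; and if $a$ is strongly $\pi$-$*$-regular, then $a$ is strongly $*$-clean.
   Context: A $*$-ring is a ring with identity with an involution $*$. A projection is $p$ with $p^2=p=p^*$. $a$ is strongly $*$-regular if $a=pu=up$ for a projection $p$ and a unit $u$. $a$ is strongly $\pi$-$*$-regular if there exist a projection $e$, a unit $u$ and $m\ge1$ with $a^m=eu$ and $a,e,u$ pairwise commuting. $a$ is strongly $*$-clean if $a=p+u$ with $p$ a projection, $u$ a unit and $pu=up$. *)

theory Defs
  imports Main
begin

locale star_ring =
  fixes star :: "'a::ring_1 \<Rightarrow> 'a"
  assumes star_add: "star (x + y) = star x + star y"
    and star_mult: "star (x * y) = star y * star x"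
    and star_star: "star (star x) = x"

definition is_unit :: "'a::ring_1 \<Rightarrow> bool" where
  "is_unit u \<longleftrightarrow> (\<exists>v. u * v = 1 \<and> v * u = 1)"

definition projection :: "('a::ring_1 \<Rightarrow> 'a) \<Rightarrow> 'a \<Rightarrow> bool" where
  "projection star p \<longleftrightarrow> p * p = p \<and> star p = p"

definition strongly_star_regular :: "('a::ring_1 \<Rightarrow> 'a) \<Rightarrow> 'a \<Rightarrow> bool" where
  "strongly_star_regular star a \<longleftrightarrow>
     (\<exists>p u. projection star p \<and> is_unit u \<and> a = p * u \<and> a = u * p)"

definition strongly_pi_star_regular :: "('a::ring_1 \<Rightarrow> 'a) \<Rightarrow> 'a \<Rightarrow> bool" where
  "strongly_pi_star_regular star a \<longleftrightarrow>
     (\<exists>e u (m::nat). m \<ge> 1 \<and> projection star e \<and> is_unit u \<and> a ^ m = e * u \<and>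
        a * e = e * a \<and> a * u = u * a \<and> e * u = u * e)"

definition strongly_star_clean :: "('a::ring_1 \<Rightarrow> 'a) \<Rightarrow> 'a \<Rightarrow> bool" where
  "strongly_star_clean star a \<longleftrightarrow>
     (\<exists>p u. projection star p \<and> is_unit u \<and> a = p + u \<and> p * u = u * p)"

end

theory Submission
  imports Defs
begin

text \<open>The first implication is immediate with exponent 1. For the second, let \<open>a ^ m = e * u\<close>
  and \<open>f = 1 - e\<close>. Then \<open>a * f\<close> is nilpotent, since \<open>(a * f) ^ m = e * u * f = 0\<close>, and
  \<open>a * e + f\<close> is a unit, since its \<open>m\<close>-th power is the unit \<open>e * u + f\<close>. The factorisation
  \<open>a - f = (a * e + f) * (e - f) * (1 - a * f)\<close> exhibits \<open>a - f\<close> as a product of units, so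
  \<open>a = f + (a - f)\<close> is a strongly \<open>*\<close>-clean decomposition.\<close>

lemma (in star_ring) star_diff: "star (x - y) = star x - star y"
  using star_add[of "x - y" y] by (simp add: eq_diff_eq)

lemma (in star_ring) star_one: "star 1 = 1"
  by (metis mult_1_left mult_1_right star_mult star_star)

lemma (in star_ring) projection_one_minus:
  assumes "projection star p"
  shows "projection star (1 - p)"
  using assms by (simp add: projection_def star_diff star_one algebra_simps)

lemma power_mult_commuting:
  fixes x y :: "'a::monoid_mult"
  assumes "x * y = y * x"
  shows "(x * y) ^ m = x ^ m * y ^ m"
proof (induction m)
  case (Suc m)
  have "(x * y) ^ Suc m = x * (y * x ^ m) * y ^ m"
    using Suc by (simp add: mult.assoc)
  also have "\<dots> = x * (x ^ m * y) * y ^ m"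
    using power_commuting_commutes[OF assms] by metis
  also have "\<dots> = x ^ Suc m * y ^ Suc m"
    by (simp add: mult.assoc)
  finally show ?case .
qed simp

lemma power_idem:
  fixes p :: "'a::monoid_mult"
  assumes "p * p = p" and "m \<ge> 1"
  shows "p ^ m = p"
  using assms(2)
proof (induction m rule: dec_induct)
  case (step k)
  then show ?case
    using assms(1) by (simp add: power_Suc2)
qed simp

lemma power_add_orthogonal_idem:
  fixes x p :: "'a::ring_1"
  assumes "x * p = 0" and "p * x = 0" and "p * p = p"
  shows "(x + p) ^ Suc m = x ^ Suc m + p"
proof (induction m)
  case (Suc m)
  have "p * x ^ Suc m = 0"
    using assms(2) by (simp add: mult.assoc[symmetric])
  with Suc show ?case
    using assms(1,3) by (simp add: distrib_left distrib_right)
qed simp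

lemma geometric_sum_commute:
  fixes x :: "'a::ring_1"
  shows "x * (\<Sum>k<m. x ^ k) = (\<Sum>k<m. x ^ k) * x"
  by (simp add: sum_distrib_left sum_distrib_right power_commutes)

lemma geometric_sum_one_minus:
  fixes x :: "'a::ring_1"
  shows "(1 - x) * (\<Sum>k<m. x ^ k) = 1 - x ^ m"
    and "(\<Sum>k<m. x ^ k) * (1 - x) = 1 - x ^ m"
proof -
  show "(1 - x) * (\<Sum>k<m. x ^ k) = 1 - x ^ m"
  proof (induction m)
    case (Suc m)
    have "(1 - x) * (\<Sum>k<Suc m. x ^ k) = (1 - x) * (\<Sum>k<m. x ^ k) + (1 - x) * x ^ m"
      by (simp add: distrib_left)
    also have "\<dots> = 1 - x ^ Suc m"
      using Suc.IH by (simp add: left_diff_distrib)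
    finally show ?case .
  qed simp
  then show "(\<Sum>k<m. x ^ k) * (1 - x) = 1 - x ^ m"
    by (simp add: algebra_simps geometric_sum_commute)
qed

lemma is_unit_mult:
  fixes x y :: "'a::ring_1"
  assumes "is_unit x" and "is_unit y"
  shows "is_unit (x * y)"
proof -
  obtain x' y' where "x * x' = 1" "x' * x = 1" "y * y' = 1" "y' * y = 1"
    using assms unfolding is_unit_def by blast
  then have "(x * y) * (y' * x') = 1" and "(y' * x') * (x * y) = 1"
    by (simp_all add: mult.assoc[symmetric]) (simp_all add: mult.assoc)
  then show ?thesis
    unfolding is_unit_def by blast
qed

lemma is_unit_of_power:
  fixes x :: "'a::ring_1"
  assumes "is_unit (x ^ m)" and "m \<ge> 1"
  shows "is_unit x"
proof -
  obtain v where xv: "x ^ m * v = 1" and vx: "v * x ^ m = 1"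
    using assms(1) unfolding is_unit_def by blast
  have split: "x ^ m = x * x ^ (m - 1)" "x ^ m = x ^ (m - 1) * x"
    using assms(2) power_minus_mult[of m x] by (simp_all add: power_commutes power_Suc[symmetric])
  define r where "r = x ^ (m - 1) * v"
  define l where "l = v * x ^ (m - 1)"
  have xr: "x * r = 1" and lx: "l * x = 1"
    using xv vx split by (simp_all add: r_def l_def mult.assoc)
  have "l = r"
    by (metis lx xr mult.assoc mult_1_left mult_1_right)
  with xr lx show ?thesis
    unfolding is_unit_def by blast
qed

lemma is_unit_one_minus_nilpotent:
  fixes n :: "'a::ring_1"
  assumes "n ^ m = 0"
  shows "is_unit (1 - n)"
  using geometric_sum_one_minus[of n m] assms unfolding is_unit_def by auto

lemma is_unit_idem_reflection:
  fixes e :: "'a::ring_1"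
  assumes "e * e = e"
  shows "is_unit (e - (1 - e))"
proof -
  have "(e - (1 - e)) * (e - (1 - e)) = 1"
    using assms by (simp add: algebra_simps)
  then show ?thesis
    unfolding is_unit_def by blast
qed

lemma is_unit_idem_corner:
  fixes e u :: "'a::ring_1"
  assumes ee: "e * e = e" and u: "is_unit u" and eu: "e * u = u * e"
  shows "is_unit (e * u + (1 - e))"
proof -
  obtain v where uv: "u * v = 1" and vu: "v * u = 1"
    using u unfolding is_unit_def by blast
  have ev: "e * v = v * e"
    by (metis eu mult.assoc mult_1_left mult_1_right uv vu)
  have inverse: "(e * x + (1 - e)) * (e * y + (1 - e)) = 1"
    if xy: "x * y = 1" and ex: "e * x = x * e" for x y
  proof -
    have eex: "e * (e * z) = e * z" for z
      using ee by (simp flip: mult.assoc)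
    have "e * (x * e) * y = e" and "e * (x * (1 - e)) = 0"
      using xy ee by (simp_all add: eex mult.assoc right_diff_distrib flip: ex)
    moreover have "(1 - e) * (e * z) = 0" and "(1 - e) * (1 - e) = 1 - e" for z
      using ee eex by (simp_all add: left_diff_distrib right_diff_distrib)
    ultimately show ?thesis
      by (simp add: distrib_left distrib_right mult.assoc)
  qed
  show ?thesis
    using inverse[OF uv eu] inverse[OF vu ev] unfolding is_unit_def by blast
qed

lemma strongly_pi_star_regular_if_strongly_star_regular:
  assumes "strongly_star_regular star a"
  shows "strongly_pi_star_regular star a"
proof -
  obtain p u where p: "projection star p" and u: "is_unit u"
    and a1: "a = p * u" and a2: "a = u * p"
    using assms unfolding strongly_star_regular_def by blast
  have "p * p = p"
    using p by (simp add: projection_def)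
  then have "a * p = p * a" and "a * u = u * a" and "p * u = u * p"
    using a1 a2 by (metis mult.assoc)+
  then show ?thesis
    unfolding strongly_pi_star_regular_def
    using p u a1 by (intro exI[of _ p] exI[of _ u] exI[of _ "1::nat"]) auto
qed

lemma is_unit_diff_complement_idem:
  fixes a e u :: "'a::ring_1"
  assumes m: "m \<ge> 1" and ee: "e * e = e" and u: "is_unit u"
    and am: "a ^ m = e * u" and ae: "a * e = e * a" and eu: "e * u = u * e"
  shows "is_unit (a - (1 - e))"
proof -
  define f where "f = 1 - e"
  have ef: "e * f = 0" and fe: "f * e = 0" and ff: "f * f = f"
    using ee by (simp_all add: f_def right_diff_distrib left_diff_distrib)
  have af: "a * f = f * a" and uf: "u * f = f * u"
    using ae eu by (simp_all add: f_def right_diff_distrib left_diff_distrib)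
  have eaf: "e * (a * f) = 0" and faf: "f * (a * f) = a * f"
    using ef ff af ae by (metis mult.assoc mult_zero_left mult_zero_right)+
  have "(a * f) ^ m = e * u * f"
    using power_mult_commuting[OF af] power_idem[OF ff m] am by simp
  also have "\<dots> = 0"
    using ef by (simp add: mult.assoc uf flip: mult.assoc[of e f u])
  finally have "is_unit (1 - a * f)"
    by (rule is_unit_one_minus_nilpotent)
  have "a * e * f = 0" and "f * (a * e) = 0"
    using ef fe af by (simp_all add: mult.assoc) (metis mult.assoc mult_zero_right)
  then have "(a * e + f) ^ m = (a * e) ^ m + f"
    using power_add_orthogonal_idem[of "a * e" f "m - 1"] ff m by simp
  also have "\<dots> = e * u + f"
    using power_mult_commuting[OF ae] power_idem[OF ee m] am eu ee
    by (simp add: mult.assoc flip: mult.assoc[of e e u])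
  finally have "is_unit (a * e + f)"
    using is_unit_of_power is_unit_idem_corner[OF ee u eu] m by (metis f_def)
  moreover have "(e - f) * (1 - a * f) = e - f + a * f"
    using eaf faf ff by (simp add: right_diff_distrib left_diff_distrib)
  moreover have "(a * e + f) * (e - f + a * f) = a - f"
  proof -
    have "a * e * (a * f) = 0" and "a * e * f = 0"
      using eaf ef by (simp_all add: mult.assoc)
    then have "(a * e + f) * (e - f + a * f) = a * (e * e) - f * f + f * (a * f)"
      using ef fe by (simp add: distrib_left distrib_right right_diff_distrib left_diff_distrib mult.assoc)
    also have "\<dots> = a * (e + f) - f"
      using ee ff faf by (simp add: distrib_left)
    finally show ?thesis
      by (simp add: f_def)
  qed
  ultimately show ?thesis
    using \<open>is_unit (1 - a * f)\<close> is_unit_mult is_unit_idem_reflection[OF ee]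
    unfolding f_def by metis
qed

lemma (in star_ring) strongly_star_clean_if_strongly_pi_star_regular:
  assumes "strongly_pi_star_regular star a"
  shows "strongly_star_clean star a"
proof -
  obtain e u and m :: nat where m: "m \<ge> 1" and pe: "projection star e" and u: "is_unit u"
    and am: "a ^ m = e * u" and ae: "a * e = e * a" and eu: "e * u = u * e"
    using assms unfolding strongly_pi_star_regular_def by blast
  have "is_unit (a - (1 - e))"
    using is_unit_diff_complement_idem[OF m _ u am ae eu] pe by (simp add: projection_def)
  moreover have "(1 - e) * (a - (1 - e)) = (a - (1 - e)) * (1 - e)"
    using ae by (simp add: algebra_simps)
  ultimately show ?thesis
    unfolding strongly_star_clean_def
    using projection_one_minus[OF pe] by (intro exI[of _ "1 - e"] exI[of _ "a - (1 - e)"]) auto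
qed

theorem corollary3p4:
  fixes star :: "'a::ring_1 \<Rightarrow> 'a" and a :: 'a
  assumes "star_ring star"
  shows "(strongly_star_regular star a \<longrightarrow> strongly_pi_star_regular star a) \<and>
         (strongly_pi_star_regular star a \<longrightarrow> strongly_star_clean star a)"
  using strongly_pi_star_regular_if_strongly_star_regular
    star_ring.strongly_star_clean_if_strongly_pi_star_regular[OF assms]
  by blast

end
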